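(* Let $E>0$ and $0<\delta_0<1$. There exists an integer $\ell_0=\ell_0(E,\delta_0)$ such that for every $v\in\mathcal{X}^1$ with $E(v)\le E$, either $\big|1-|v(x)|\big|<\delta_0$ for all $x\in\mathbb{R}$, or there exist $\ell\le\ell_0$ points $x_1,\dots,x_\ell$ such that $\big|1-|v(x_i)|\big|\ge\delta_0$ for all $1\le i\le\ell$ and $\big|1-|v(x)|\big|\le\delta_0$ for all $x\in\mathbb{R}\setminus\bigcup_{i=1}^\ell[x_i-1,x_i+1]$.
   Context: $\mathcal{X}^1=\{w\in L^\infty(\mathbb{R};\mathbb{C}):\ w'\in L^2,\ 1-|w|^2\in L^2\}$. $E(v)=\frac12\int_\mathbb{R}|v'|^2+\frac14\int_\mathbb{R}(1-|v|^2)^2$. *)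

theory Defs
  imports "HOL-Analysis.Analysis"
begin

text \<open>The space X^1, for the continuous representative v of w, with g the
(weak) derivative of v: v is bounded, v(y) - v(x) = integral of g over [x,y],
g is in L^2, and 1 - |v|^2 is in L^2.\<close>
definition in_X1 :: "(real \<Rightarrow> complex) \<Rightarrow> (real \<Rightarrow> complex) \<Rightarrow> bool" where
  "in_X1 v g \<longleftrightarrow>
     continuous_on UNIV v \<and> bounded (range v) \<and>
     g \<in> borel_measurable lborel \<and>
     integrable lborel (\<lambda>t. (cmod (g t))\<^sup>2) \<and>
     (\<forall>x y. x \<le> y \<longrightarrow> v y - v x = (LBINT t=x..y. g t)) \<and>
     integrable lborel (\<lambda>x. (1 - (cmod (v x))\<^sup>2)\<^sup>2)"

definition GL_energy :: "(real \<Rightarrow> complex) \<Rightarrow> (real \<Rightarrow> complex) \<Rightarrow> real" where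
  "GL_energy v g = 1/2 * (\<integral>t. (cmod (g t))\<^sup>2 \<partial>lborel)
                  + 1/4 * (\<integral>x. (1 - (cmod (v x))\<^sup>2)\<^sup>2 \<partial>lborel)"

end

theory Submission
  imports Defs
begin

text \<open>Since \<open>v' \<in> L\<^sup>2\<close>, the map \<open>v\<close> is uniformly (1/2-Hoelder) continuous with a modulus
depending only on the energy. Hence \<open>|1 - |v||\<close> stays at least \<open>\<delta>\<^sub>0/2\<close> on an interval of
energy-controlled length around every point where it is at least \<open>\<delta>\<^sub>0\<close>, so each such
point contributes a fixed amount to \<open>\<integral>(1 - |v|\<^sup>2)\<^sup>2 \<le> 4E\<close>. A maximal 1-separated set of
such points is therefore uniformly bounded in size, and by maximality the intervals of
radius 1 around it cover all of them.\<close>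

definition separated :: "real \<Rightarrow> 'a::metric_space set \<Rightarrow> bool" where
  "separated d S \<longleftrightarrow> (\<forall>a\<in>S. \<forall>b\<in>S. a \<noteq> b \<longrightarrow> d < dist a b)"

lemma separated_mono: "separated d S \<Longrightarrow> d' \<le> d \<Longrightarrow> separated d' S"
  unfolding separated_def by fastforce

lemma maximal_separated_subset:
  fixes B :: "'a::metric_space set"
  assumes "0 \<le> d"
    and bounded: "\<And>S. finite S \<Longrightarrow> S \<subseteq> B \<Longrightarrow> separated d S \<Longrightarrow> card S \<le> N"
  obtains S where "finite S" "S \<subseteq> B" "separated d S" "\<And>x. x \<in> B \<Longrightarrow> \<exists>s\<in>S. dist x s \<le> d"
proof -
  define P where "P S \<longleftrightarrow> finite S \<and> S \<subseteq> B \<and> separated d S" for S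
  have "P {}" by (simp add: P_def separated_def)
  then obtain S where PS: "P S" and greatest: "\<And>S'. P S' \<Longrightarrow> card S' \<le> card S"
    using ex_has_greatest_nat[of P "{}" card "Suc N"] bounded by (force simp: P_def)
  have covers: "\<exists>s\<in>S. dist x s \<le> d" if "x \<in> B" for x
  proof (rule ccontr)
    assume "\<not> ?thesis"
    hence far: "\<forall>s\<in>S. d < dist x s" by auto
    hence "x \<notin> S" using \<open>0 \<le> d\<close> by fastforce
    moreover have "P (insert x S)"
      using PS far that by (auto simp: P_def separated_def dist_commute)
    ultimately show False
      using greatest[of "insert x S"] PS by (simp add: P_def)
  qed
  show thesis using PS covers by (intro that) (auto simp: P_def)
qed

lemma card_separated_mult_le_integral:
  fixes f :: "real \<Rightarrow> real"
  assumes S: "finite S" "separated (2*r) S" and r: "0 < r"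
    and f: "integrable lborel f" "\<And>t. 0 \<le> f t"
    and lower: "\<And>s t. s \<in> S \<Longrightarrow> t \<in> {s-r..s+r} \<Longrightarrow> c \<le> f t"
  shows "real (card S) * (2*r*c) \<le> (\<integral>t. f t \<partial>lborel)"
proof -
  let ?I = "\<lambda>s. {s-r..s+r}"
  have int_I: "integrable lborel (\<lambda>t. indicator (?I s) t :: real)" for s
    using r by (simp add: integrable_indicator_iff)
  have int_fI: "integrable lborel (\<lambda>t. f t * indicator (?I s) t)" for s
    by (rule integrable_real_mult_indicator) (auto simp: f)
  have overlap: "(\<Sum>s\<in>S. indicator (?I s) t :: real) \<le> 1" for t
  proof (cases "\<exists>s\<in>S. t \<in> ?I s")
    case True
    then obtain s where s: "s \<in> S" "t \<in> ?I s" by blast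
    have "indicator (?I s') t = (0::real)" if "s' \<in> S - {s}" for s'
    proof -
      have "2*r < \<bar>s' - s\<bar>" using that s S(2) by (auto simp: separated_def dist_real_def)
      with s(2) show ?thesis unfolding indicator_def by (cases "s' < s") auto
    qed
    hence "(\<Sum>s\<in>S. indicator (?I s) t :: real) = indicator (?I s) t"
      using S(1) s by (simp add: sum.remove)
    thus ?thesis by simp
  next
    case False
    hence "(\<Sum>s\<in>S. indicator (?I s) t :: real) = 0" by (intro sum.neutral) auto
    thus ?thesis by simp
  qed
  have "real (card S) * (2*r*c) = (\<Sum>s\<in>S. (\<integral>t. c * indicator (?I s) t \<partial>lborel))"
    using int_I r by (simp add: measure_def)
  also have "\<dots> \<le> (\<Sum>s\<in>S. (\<integral>t. f t * indicator (?I s) t \<partial>lborel))"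
    using int_I int_fI lower by (intro sum_mono integral_mono) (auto simp: indicator_def)
  also have "\<dots> = (\<integral>t. f t * (\<Sum>s\<in>S. indicator (?I s) t) \<partial>lborel)"
    using int_fI by (simp add: sum_distrib_left)
  also have "\<dots> \<le> (\<integral>t. f t \<partial>lborel)"
    using overlap f(2) by (intro integral_mono'[OF f(1)])
      (auto simp: mult_left_le sum_nonneg)
  finally show ?thesis .
qed

lemma X1_norm_diff_le:
  assumes X: "in_X1 v g" and a: "a > 0" and xy: "x \<le> y"
  shows "cmod (v y - v x) \<le> (\<integral>t. (cmod (g t))\<^sup>2 \<partial>lborel) / (2*a) + a/2 * (y - x)"
proof -
  let ?A = "{x<..<y}"
  have int_g: "integrable lborel (\<lambda>t. (cmod (g t))\<^sup>2)"
    and "v y - v x = (LBINT t=x..y. g t)"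
    using X xy unfolding in_X1_def by auto
  hence v_diff: "v y - v x = (\<integral>t. indicator ?A t *\<^sub>R g t \<partial>lborel)"
    using xy by (simp add: interval_lebesgue_integral_def set_lebesgue_integral_def)
  have int_A: "integrable lborel (\<lambda>t. indicator ?A t :: real)"
    using xy by (simp add: integrable_indicator_iff emeasure_lborel_Ioo)
  have "cmod z \<le> (cmod z)\<^sup>2 / (2*a) + a/2" for z :: complex
  proof -
    have "2*a*cmod z \<le> (cmod z)\<^sup>2 + a\<^sup>2"
      using sum_squares_ge_zero[of "cmod z - a" 0] by (simp add: power2_eq_square algebra_simps)
    thus ?thesis using a by (simp add: field_simps power2_eq_square)
  qed
  hence pointwise: "cmod (indicator ?A t *\<^sub>R g t) \<le> (cmod (g t))\<^sup>2 / (2*a) + a/2 * indicator ?A t" for t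
    using a by (cases "t \<in> ?A") auto
  have "cmod (v y - v x) \<le> (\<integral>t. cmod (indicator ?A t *\<^sub>R g t) \<partial>lborel)"
    unfolding v_diff by (rule integral_norm_bound)
  also have "\<dots> \<le> (\<integral>t. (cmod (g t))\<^sup>2 / (2*a) + a/2 * indicator ?A t \<partial>lborel)"
    using int_g int_A pointwise a by (intro integral_mono') auto
  also have "\<dots> = (\<integral>t. (cmod (g t))\<^sup>2 \<partial>lborel) / (2*a) + a/2 * (y - x)"
    using int_g int_A xy by simp
  finally show ?thesis .
qed

lemma X1_norm_diff_le_of_dist:
  assumes X: "in_X1 v g" and K: "(\<integral>t. (cmod (g t))\<^sup>2 \<partial>lborel) \<le> K" "K > 0"
    and \<delta>: "\<delta> > 0" and near: "\<bar>t - x\<bar> \<le> \<delta>\<^sup>2 / K"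
  shows "cmod (v t - v x) \<le> \<delta>"
proof -
  have "cmod (v y - v z) \<le> \<delta>" if "z \<le> y" "y - z \<le> \<delta>\<^sup>2 / K" for y z
  proof -
    have a: "K/\<delta> > 0" using K \<delta> by simp
    have "cmod (v y - v z) \<le> (\<integral>t. (cmod (g t))\<^sup>2 \<partial>lborel) / (2*(K/\<delta>)) + (K/\<delta>)/2 * (y - z)"
      by (rule X1_norm_diff_le[OF X a that(1)])
    also have "\<dots> \<le> K / (2*(K/\<delta>)) + (K/\<delta>)/2 * (\<delta>\<^sup>2 / K)"
      using K a that by (intro add_mono divide_right_mono mult_left_mono) auto
    also have "\<dots> = \<delta>" using K \<delta> by (simp add: field_simps power2_eq_square)
    finally show ?thesis .
  qed
  from this[of x t] this[of t x] near show ?thesis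
    by (cases "x \<le> t") (auto simp: norm_minus_commute)
qed

lemma GL_energy_bounds:
  shows "(\<integral>t. (cmod (g t))\<^sup>2 \<partial>lborel) \<le> 2 * GL_energy v g"
    and "(\<integral>x. (1 - (cmod (v x))\<^sup>2)\<^sup>2 \<partial>lborel) \<le> 4 * GL_energy v g"
proof -
  have "0 \<le> (\<integral>t. (cmod (g t))\<^sup>2 \<partial>lborel)" "0 \<le> (\<integral>x. (1 - (cmod (v x))\<^sup>2)\<^sup>2 \<partial>lborel)"
    by (auto intro: integral_nonneg_AE)
  then show "(\<integral>t. (cmod (g t))\<^sup>2 \<partial>lborel) \<le> 2 * GL_energy v g"
    and "(\<integral>x. (1 - (cmod (v x))\<^sup>2)\<^sup>2 \<partial>lborel) \<le> 4 * GL_energy v g"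
    unfolding GL_energy_def by simp_all
qed

lemma square_one_minus_le_square_one_minus_square:
  fixes x :: real
  assumes "0 \<le> x"
  shows "(1 - x)\<^sup>2 \<le> (1 - x\<^sup>2)\<^sup>2"
proof -
  have "(1 - x)\<^sup>2 * 1 \<le> (1 - x)\<^sup>2 * (1 + x)\<^sup>2"
    using assms by (intro mult_left_mono) (auto intro!: one_le_power)
  also have "\<dots> = (1 - x\<^sup>2)\<^sup>2" by (simp add: power2_eq_square algebra_simps)
  finally show ?thesis by simp
qed

lemma X1_potential_ge_near_bad_point:
  assumes X: "in_X1 v g" and K: "(\<integral>t. (cmod (g t))\<^sup>2 \<partial>lborel) \<le> K" "K > 0"
    and \<delta>: "\<delta> > 0" and bad: "\<delta> \<le> \<bar>1 - cmod (v x)\<bar>" and near: "\<bar>t - x\<bar> \<le> \<delta>\<^sup>2 / (4*K)"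
  shows "\<delta>\<^sup>2 / 4 \<le> (1 - (cmod (v t))\<^sup>2)\<^sup>2"
proof -
  have "cmod (v t - v x) \<le> \<delta>/2"
    using near by (intro X1_norm_diff_le_of_dist[OF X K]) (auto simp: \<delta> power_divide)
  moreover have "\<bar>cmod (v t) - cmod (v x)\<bar> \<le> cmod (v t - v x)"
    by (rule norm_triangle_ineq3)
  ultimately have "\<delta>/2 \<le> \<bar>1 - cmod (v t)\<bar>" using bad by linarith
  hence "(\<delta>/2)\<^sup>2 \<le> (1 - cmod (v t))\<^sup>2"
    using \<delta> by (metis abs_le_square_iff abs_of_pos half_gt_zero power2_abs)
  also have "\<dots> \<le> (1 - (cmod (v t))\<^sup>2)\<^sup>2"
    by (simp add: square_one_minus_le_square_one_minus_square)
  finally show ?thesis by (simp add: power_divide)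
qed

lemma X1_card_separated_bad_points_le:
  assumes E: "E > 0" and \<delta>: "\<delta> > 0"
  shows "\<exists>N::nat. \<forall>v g S. in_X1 v g \<and> GL_energy v g \<le> E \<and> finite S \<and> separated 1 S \<and>
           S \<subseteq> {x. \<delta> \<le> \<bar>1 - cmod (v x)\<bar>} \<longrightarrow> card S \<le> N"
proof (intro exI allI impI, elim conjE)
  define r where "r = min (1/2) (\<delta>\<^sup>2 / (8*E))"
  have r: "0 < r" "2*r \<le> 1" "r \<le> \<delta>\<^sup>2 / (4*(2*E))"
    using E \<delta> by (auto simp: r_def)
  fix v g S
  assume X: "in_X1 v g" and En: "GL_energy v g \<le> E" and S: "finite S" "separated 1 S"
    and bad: "S \<subseteq> {x. \<delta> \<le> \<bar>1 - cmod (v x)\<bar>}"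
  have K: "(\<integral>t. (cmod (g t))\<^sup>2 \<partial>lborel) \<le> 2*E"
    and F: "(\<integral>x. (1 - (cmod (v x))\<^sup>2)\<^sup>2 \<partial>lborel) \<le> 4*E"
    using GL_energy_bounds[where v = v and g = g] En by linarith+
  have "real (card S) * (2*r*(\<delta>\<^sup>2/4)) \<le> (\<integral>x. (1 - (cmod (v x))\<^sup>2)\<^sup>2 \<partial>lborel)"
  proof (rule card_separated_mult_le_integral[OF S(1) separated_mono[OF S(2) r(2)] r(1)])
    show "integrable lborel (\<lambda>x. (1 - (cmod (v x))\<^sup>2)\<^sup>2)" using X by (simp add: in_X1_def)
    fix s t assume "s \<in> S" "t \<in> {s-r..s+r}"
    with bad r(3) show "\<delta>\<^sup>2/4 \<le> (1 - (cmod (v t))\<^sup>2)\<^sup>2"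
      by (intro X1_potential_ge_near_bad_point[OF X K _ \<delta>, of s]) (auto simp: E abs_le_iff)
  qed simp
  hence "real (card S) \<le> 4*E / (2*r*(\<delta>\<^sup>2/4))"
    using F r \<delta> by (simp add: pos_le_divide_eq)
  thus "card S \<le> nat \<lceil>4*E / (2*r*(\<delta>\<^sup>2/4))\<rceil>" by linarith
qed

theorem lemma7:
  fixes E \<delta>0 :: real
  assumes "E > 0" and "0 < \<delta>0" and "\<delta>0 < 1"
  shows "\<exists>L0::nat. \<forall>v g. in_X1 v g \<and> GL_energy v g \<le> E \<longrightarrow>
           ((\<forall>x. \<bar>1 - cmod (v x)\<bar> < \<delta>0) \<or>
            (\<exists>xs::real list. 1 \<le> length xs \<and> length xs \<le> L0 \<and>
               (\<forall>xi\<in>set xs. \<bar>1 - cmod (v xi)\<bar> \<ge> \<delta>0) \<and>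
               (\<forall>x. (\<forall>xi\<in>set xs. x \<notin> {xi - 1..xi + 1}) \<longrightarrow> \<bar>1 - cmod (v x)\<bar> \<le> \<delta>0)))"
proof -
  obtain N where N: "\<And>v g S. in_X1 v g \<Longrightarrow> GL_energy v g \<le> E \<Longrightarrow> finite S \<Longrightarrow> separated 1 S \<Longrightarrow>
      S \<subseteq> {x. \<delta>0 \<le> \<bar>1 - cmod (v x)\<bar>} \<Longrightarrow> card S \<le> N"
    using X1_card_separated_bad_points_le[OF assms(1,2)] by blast
  show ?thesis
  proof (intro exI[of _ N] allI impI, elim conjE, subst disj_commute, rule disjCI)
    fix v g assume X: "in_X1 v g" "GL_energy v g \<le> E" and "\<not> (\<forall>x. \<bar>1 - cmod (v x)\<bar> < \<delta>0)"
    then obtain x0 where x0: "\<delta>0 \<le> \<bar>1 - cmod (v x0)\<bar>" by (auto simp: not_less)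
    obtain S where S: "finite S" "S \<subseteq> {x. \<delta>0 \<le> \<bar>1 - cmod (v x)\<bar>}" "separated 1 S"
      and covers: "\<And>x. \<delta>0 \<le> \<bar>1 - cmod (v x)\<bar> \<Longrightarrow> \<exists>s\<in>S. dist x s \<le> 1"
      using maximal_separated_subset[of 1 "{x. \<delta>0 \<le> \<bar>1 - cmod (v x)\<bar>}" N] N[OF X] by auto
    define xs where "xs = sorted_list_of_set S"
    have set_xs: "set xs = S" and "length xs = card S" using S(1) by (simp_all add: xs_def)
    moreover have "S \<noteq> {}" using covers[OF x0] by auto
    ultimately have "1 \<le> length xs" "length xs \<le> N"
      using S(1) N[OF X S(1,3,2)] by (simp_all add: Suc_le_eq card_gt_0_iff)
    moreover have "\<forall>x. (\<forall>xi\<in>set xs. x \<notin> {xi - 1..xi + 1}) \<longrightarrow> \<bar>1 - cmod (v x)\<bar> \<le> \<delta>0"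
    proof (intro allI impI)
      fix x assume uncovered: "\<forall>xi\<in>set xs. x \<notin> {xi - 1..xi + 1}"
      show "\<bar>1 - cmod (v x)\<bar> \<le> \<delta>0"
      proof (rule ccontr)
        assume "\<not> ?thesis"
        then obtain s where "s \<in> S" "dist x s \<le> 1" using covers[of x] by auto
        with uncovered show False unfolding set_xs by (auto simp: dist_real_def abs_le_iff)
      qed
    qed
    ultimately show "\<exists>xs. 1 \<le> length xs \<and> length xs \<le> N \<and>
        (\<forall>xi\<in>set xs. \<delta>0 \<le> \<bar>1 - cmod (v xi)\<bar>) \<and>
        (\<forall>x. (\<forall>xi\<in>set xs. x \<notin> {xi - 1..xi + 1}) \<longrightarrow> \<bar>1 - cmod (v x)\<bar> \<le> \<delta>0)"
      using S(2) set_xs by blast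
  qed
qed

end
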